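(* Consider the fully discrete explicit splitting scheme described in the context, with mirrored boundary layers and initialisation $\boldsymbol{u}^0=\boldsymbol{f}$, and let the time step size satisfy $\tau\le\min\{\tau_1,\tau_2,\tau_3,\tau_4\}$ where $$\tau_1=\frac{h^2}{4(1-\nu)|p-1|},\quad \tau_2=\frac{h^2}{2\nu|p-1|},\quad \tau_3=\frac{h^2}{2\sqrt2(1-\nu)|2-p|},\quad \tau_4=\frac{h^2}{2\nu|2-p|}$$ (a quotient with vanishing denominator is read as $+\infty$). Then the scheme is $L^\infty$-stable, $\|\boldsymbol{u}^k\|_\infty\le\|\boldsymbol{u}^{k-1}\|_\infty$ for all $k\ge1$, and satisfies the discrete maximum–minimum principle $\min_{i,j}f_{i,j}\le u^k_{n,m}\le\max_{i,j}f_{i,j}$ for all grid indices $n,m$ and all $k\ge1$.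
   Context: The scheme discretises $u_t=(2-p)\,\mathrm{curv}(u)|\nabla u|+(p-1)\Delta u$ (for $p\ge1$) resp. $u_t=(2-p)\,\mathrm{curv}(u)|\nabla u|+(p-1)\operatorname{sgn}(|\nabla u|)\Delta u$ (for $p<1$), with $p\in\mathbb{R}$, on a rectangular grid of spacing $h$ with values $u_{i,j}$, given image $\boldsymbol{f}$, and weight $\nu\in(0,1)$ (the paper uses $\nu=\sqrt2-1$). Values outside the grid are defined by mirroring one or two layers of boundary pixels (homogeneous Neumann boundary conditions). Forward differences: $u^x_{i,j}=(u_{i+1,j}-u_{i,j})/h$, $u^y_{i,j}=(u_{i,j+1}-u_{i,j})/h$, $u^d_{i,j}=(u_{i+1,j+1}-u_{i,j})/(\sqrt2h)$, $u^e_{i,j}=(u_{i+1,j-1}-u_{i,j})/(\sqrt2h)$. Minmod: $\mathrm{M}(a,b,c)$ is the argument of minimal modulus if $ab\ge0$ and $ac\ge0$, and $0$ otherwise. Diffusion operators: for $p\ge1$, $\boldsymbol{D}_+(\boldsymbol u)_{i,j}=(p-1)(u_{i+1,j}+u_{i-1,j}+u_{i,j+1}+u_{i,j-1}-4u_{i,j})/h^2$ and $\boldsymbol{D}_\times(\boldsymbol u)_{i,j}=(p-1)(u_{i+1,j+1}+u_{i-1,j-1}+u_{i+1,j-1}+u_{i-1,j+1}-4u_{i,j})/(2h^2)$. For $p<1$, $\boldsymbol{D}_+(\boldsymbol u)_{i,j}=\frac{p-1}{h}\bigl(\mathrm{M}(u^x_{i+1,j},u^x_{i,j},u^x_{i-1,j})-\mathrm{M}(u^x_{i,j},u^x_{i-1,j},u^x_{i-2,j})+\mathrm{M}(u^y_{i,j+1},u^y_{i,j},u^y_{i,j-1})-\mathrm{M}(u^y_{i,j},u^y_{i,j-1},u^y_{i,j-2})\bigr)$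 and $\boldsymbol{D}_\times(\boldsymbol u)_{i,j}=\frac{p-1}{\sqrt2h}\bigl(\mathrm{M}(u^d_{i+1,j+1},u^d_{i,j},u^d_{i-1,j-1})-\mathrm{M}(u^d_{i,j},u^d_{i-1,j-1},u^d_{i-2,j-2})+\mathrm{M}(u^e_{i+1,j-1},u^e_{i,j},u^e_{i-1,j+1})-\mathrm{M}(u^e_{i,j},u^e_{i-1,j+1},u^e_{i-2,j+2})\bigr)$. Curvature: $c_{i,j}$ is the isophote curvature $(u_x^2u_{yy}-2u_xu_yu_{xy}+u_y^2u_{xx})/(u_x^2+u_y^2+\epsilon)^{3/2}$, $\epsilon=10^{-10}$, with derivatives approximated by central differences, then clipped to $[-2/h,2/h]$. Curvature operators: $\boldsymbol{M}_+(\boldsymbol u)_{i,j}=(2-p)c_{i,j}\,G^+_{i,j}$, $\boldsymbol{M}_\times(\boldsymbol u)_{i,j}=(2-p)c_{i,j}\,G^\times_{i,j}$, where (Rouy–Tourin upwinding) if $(2-p)c_{i,j}\ge0$ (dilation case) $G^+_{i,j}=\bigl(\max(-u^x_{i-1,j},u^x_{i,j},0)^2+\max(-u^y_{i,j-1},u^y_{i,j},0)^2\bigr)^{1/2}$ and $G^\times_{i,j}=\bigl(\max(-u^d_{i-1,j-1},u^d_{i,j},0)^2+\max(-u^e_{i-1,j+1},u^e_{i,j},0)^2\bigr)^{1/2}$, and otherwise (erosion case) $G^+_{i,j}=\bigl(\max(-u^x_{i,j},u^x_{i-1,j},0)^2+\max(-u^y_{i,j},u^y_{i,j-1},0)^2\bigr)^{1/2}$,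 $G^\times_{i,j}=\bigl(\max(-u^d_{i,j},u^d_{i-1,j-1},0)^2+\max(-u^e_{i,j},u^e_{i-1,j+1},0)^2\bigr)^{1/2}$. Scheme: $\boldsymbol u^{k+1/4}=\boldsymbol u^k+\tau(1-\nu)\boldsymbol D_+(\boldsymbol u^k)$, $\boldsymbol u^{k+1/2}=\boldsymbol u^{k+1/4}+\tau\nu\boldsymbol D_\times(\boldsymbol u^{k+1/4})$, $\boldsymbol u^{k+3/4}=\boldsymbol u^{k+1/2}+\tau(1-\nu)\boldsymbol M_+(\boldsymbol u^{k+1/2})$, $\boldsymbol u^{k+1}=\boldsymbol u^{k+3/4}+\tau\nu\boldsymbol M_\times(\boldsymbol u^{k+3/4})$. *)

theory Defs
  imports Complex_Main
begin

(* Grid functions are maps int => int => real; the image lives on the grid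
   {0..<Nx} x {0..<Ny}.  Values outside are obtained by mirroring
   (homogeneous Neumann boundary conditions, symmetric extension). *)

definition grid :: "nat \<Rightarrow> nat \<Rightarrow> (int \<times> int) set" where
  "grid Nx Ny = {0..<int Nx} \<times> {0..<int Ny}"

(* mirror an index into {0..<N}: -1 |-> 0, -2 |-> 1, N |-> N-1, N+1 |-> N-2 *)
definition refl_idx :: "nat \<Rightarrow> int \<Rightarrow> int" where
  "refl_idx N i = (let m = i mod (2 * int N) in if m < int N then m else 2 * int N - 1 - m)"

definition ext :: "nat \<Rightarrow> nat \<Rightarrow> (int \<Rightarrow> int \<Rightarrow> real) \<Rightarrow> int \<Rightarrow> int \<Rightarrow> real" where
  "ext Nx Ny u i j = u (refl_idx Nx i) (refl_idx Ny j)"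

definition minmod :: "real \<Rightarrow> real \<Rightarrow> real \<Rightarrow> real" where
  "minmod a b c = (if a * b \<ge> 0 \<and> a * c \<ge> 0 then
      (if \<bar>a\<bar> \<le> \<bar>b\<bar> \<and> \<bar>a\<bar> \<le> \<bar>c\<bar> then a else if \<bar>b\<bar> \<le> \<bar>c\<bar> then b else c)
    else 0)"

definition dx :: "real \<Rightarrow> (int \<Rightarrow> int \<Rightarrow> real) \<Rightarrow> int \<Rightarrow> int \<Rightarrow> real" where
  "dx h v i j = (v (i+1) j - v i j) / h"
definition dy :: "real \<Rightarrow> (int \<Rightarrow> int \<Rightarrow> real) \<Rightarrow> int \<Rightarrow> int \<Rightarrow> real" where
  "dy h v i j = (v i (j+1) - v i j) / h"
definition dd :: "real \<Rightarrow> (int \<Rightarrow> int \<Rightarrow> real) \<Rightarrow> int \<Rightarrow> int \<Rightarrow> real" where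
  "dd h v i j = (v (i+1) (j+1) - v i j) / (sqrt 2 * h)"
definition de :: "real \<Rightarrow> (int \<Rightarrow> int \<Rightarrow> real) \<Rightarrow> int \<Rightarrow> int \<Rightarrow> real" where
  "de h v i j = (v (i+1) (j-1) - v i j) / (sqrt 2 * h)"

definition Dplus :: "real \<Rightarrow> real \<Rightarrow> (int \<Rightarrow> int \<Rightarrow> real) \<Rightarrow> int \<Rightarrow> int \<Rightarrow> real" where
  "Dplus p h v i j = (if p \<ge> 1 then
      (p - 1) * (v (i+1) j + v (i-1) j + v i (j+1) + v i (j-1) - 4 * v i j) / h\<^sup>2
    else (p - 1) / h *
      (minmod (dx h v (i+1) j) (dx h v i j) (dx h v (i-1) j)
       - minmod (dx h v i j) (dx h v (i-1) j) (dx h v (i-2) j)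
       + minmod (dy h v i (j+1)) (dy h v i j) (dy h v i (j-1))
       - minmod (dy h v i j) (dy h v i (j-1)) (dy h v i (j-2))))"

definition Dtimes :: "real \<Rightarrow> real \<Rightarrow> (int \<Rightarrow> int \<Rightarrow> real) \<Rightarrow> int \<Rightarrow> int \<Rightarrow> real" where
  "Dtimes p h v i j = (if p \<ge> 1 then
      (p - 1) * (v (i+1) (j+1) + v (i-1) (j-1) + v (i+1) (j-1) + v (i-1) (j+1) - 4 * v i j) / (2 * h\<^sup>2)
    else (p - 1) / (sqrt 2 * h) *
      (minmod (dd h v (i+1) (j+1)) (dd h v i j) (dd h v (i-1) (j-1))
       - minmod (dd h v i j) (dd h v (i-1) (j-1)) (dd h v (i-2) (j-2))
       + minmod (de h v (i+1) (j-1)) (de h v i j) (de h v (i-1) (j+1))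
       - minmod (de h v i j) (de h v (i-1) (j+1)) (de h v (i-2) (j+2))))"

(* isophote curvature by central differences, eps = 10^-10, clipped to [-2/h, 2/h] *)
definition curv :: "real \<Rightarrow> (int \<Rightarrow> int \<Rightarrow> real) \<Rightarrow> int \<Rightarrow> int \<Rightarrow> real" where
  "curv h v i j = (let
      ux = (v (i+1) j - v (i-1) j) / (2 * h);
      uy = (v i (j+1) - v i (j-1)) / (2 * h);
      uxx = (v (i+1) j - 2 * v i j + v (i-1) j) / h\<^sup>2;
      uyy = (v i (j+1) - 2 * v i j + v i (j-1)) / h\<^sup>2;
      uxy = (v (i+1) (j+1) - v (i+1) (j-1) - v (i-1) (j+1) + v (i-1) (j-1)) / (4 * h\<^sup>2);
      c = (ux\<^sup>2 * uyy - 2 * ux * uy * uxy + uy\<^sup>2 * uxx) / (ux\<^sup>2 + uy\<^sup>2 + 1 / 10^10) powr (3/2)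
    in max (- 2 / h) (min (2 / h) c))"

definition Gplus :: "real \<Rightarrow> real \<Rightarrow> (int \<Rightarrow> int \<Rightarrow> real) \<Rightarrow> int \<Rightarrow> int \<Rightarrow> real" where
  "Gplus p h v i j = (if (2 - p) * curv h v i j \<ge> 0 then
      sqrt ((max (max (- dx h v (i-1) j) (dx h v i j)) 0)\<^sup>2 + (max (max (- dy h v i (j-1)) (dy h v i j)) 0)\<^sup>2)
    else
      sqrt ((max (max (- dx h v i j) (dx h v (i-1) j)) 0)\<^sup>2 + (max (max (- dy h v i j) (dy h v i (j-1))) 0)\<^sup>2))"

definition Gtimes :: "real \<Rightarrow> real \<Rightarrow> (int \<Rightarrow> int \<Rightarrow> real) \<Rightarrow> int \<Rightarrow> int \<Rightarrow> real" where
  "Gtimes p h v i j = (if (2 - p) * curv h v i j \<ge> 0 then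
      sqrt ((max (max (- dd h v (i-1) (j-1)) (dd h v i j)) 0)\<^sup>2 + (max (max (- de h v (i-1) (j+1)) (de h v i j)) 0)\<^sup>2)
    else
      sqrt ((max (max (- dd h v i j) (dd h v (i-1) (j-1))) 0)\<^sup>2 + (max (max (- de h v i j) (de h v (i-1) (j+1))) 0)\<^sup>2))"

definition Mplus :: "real \<Rightarrow> real \<Rightarrow> (int \<Rightarrow> int \<Rightarrow> real) \<Rightarrow> int \<Rightarrow> int \<Rightarrow> real" where
  "Mplus p h v i j = (2 - p) * curv h v i j * Gplus p h v i j"

definition Mtimes :: "real \<Rightarrow> real \<Rightarrow> (int \<Rightarrow> int \<Rightarrow> real) \<Rightarrow> int \<Rightarrow> int \<Rightarrow> real" where
  "Mtimes p h v i j = (2 - p) * curv h v i j * Gtimes p h v i j"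

definition substep :: "nat \<Rightarrow> nat \<Rightarrow> ((int \<Rightarrow> int \<Rightarrow> real) \<Rightarrow> int \<Rightarrow> int \<Rightarrow> real) \<Rightarrow> real
     \<Rightarrow> (int \<Rightarrow> int \<Rightarrow> real) \<Rightarrow> int \<Rightarrow> int \<Rightarrow> real" where
  "substep Nx Ny Op c u = (\<lambda>i j. ext Nx Ny u i j + c * Op (ext Nx Ny u) i j)"

definition scheme_step :: "nat \<Rightarrow> nat \<Rightarrow> real \<Rightarrow> real \<Rightarrow> real \<Rightarrow> real
     \<Rightarrow> (int \<Rightarrow> int \<Rightarrow> real) \<Rightarrow> int \<Rightarrow> int \<Rightarrow> real" where
  "scheme_step Nx Ny h p \<nu> \<tau> u =
     substep Nx Ny (Mtimes p h) (\<tau> * \<nu>)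
      (substep Nx Ny (Mplus p h) (\<tau> * (1 - \<nu>))
        (substep Nx Ny (Dtimes p h) (\<tau> * \<nu>)
          (substep Nx Ny (Dplus p h) (\<tau> * (1 - \<nu>)) u)))"

definition scheme :: "nat \<Rightarrow> nat \<Rightarrow> real \<Rightarrow> real \<Rightarrow> real \<Rightarrow> real
     \<Rightarrow> (int \<Rightarrow> int \<Rightarrow> real) \<Rightarrow> nat \<Rightarrow> int \<Rightarrow> int \<Rightarrow> real" where
  "scheme Nx Ny h p \<nu> \<tau> f k = (scheme_step Nx Ny h p \<nu> \<tau> ^^ k) f"

definition supnorm :: "nat \<Rightarrow> nat \<Rightarrow> (int \<Rightarrow> int \<Rightarrow> real) \<Rightarrow> real" where
  "supnorm Nx Ny u = Max ((\<lambda>(i, j). \<bar>u i j\<bar>) ` grid Nx Ny)"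

end

theory Submission
  imports Defs
begin

(* Each substep u + c Op(u) obeys a pointwise maximum-minimum principle under its time step
   restriction: at a pixel with value x the increment is at most a fraction <= 1 of hi - x and at
   least that fraction of lo - x, where [lo, hi] bounds all values.  For linear diffusion this is
   the nonnegativity of the stencil weights; for p < 1 the difference of two minmod fluxes lies
   between 0 and the one-sided differences to the two neighbours; for the curvature terms the
   Rouy-Tourin upwind gradient only sees neighbours above the centre value (dilation) or below it
   (erosion), and the clipped curvature satisfies |curv| <= 2/h.  Mirroring creates no new values, so
   each time step maps the range [min u, max u] of the previous iterate into itself.  This gives
   the maximum-minimum principle, and the sup norm cannot grow because |min u| and |max u| are at
   most the sup norm of u. *)

definition bounded_on ::
    "(int \<times> int) set \<Rightarrow> real \<Rightarrow> real \<Rightarrow> (int \<Rightarrow> int \<Rightarrow> real) \<Rightarrow> bool" where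
  "bounded_on A lo hi v \<longleftrightarrow> (\<forall>(i, j) \<in> A. v i j \<in> {lo..hi})"

definition max_min_principle ::
    "real \<Rightarrow> ((int \<Rightarrow> int \<Rightarrow> real) \<Rightarrow> int \<Rightarrow> int \<Rightarrow> real) \<Rightarrow> bool" where
  "max_min_principle c Op \<longleftrightarrow>
     (\<forall>lo hi v i j. bounded_on UNIV lo hi v \<longrightarrow> v i j + c * Op v i j \<in> {lo..hi})"

lemma bounded_onD: "bounded_on UNIV lo hi v \<Longrightarrow> lo \<le> v i j \<and> v i j \<le> hi"
  by (simp add: bounded_on_def)

lemma increment_in_range:
  fixes x K m S lo hi :: real
  assumes "x \<in> {lo..hi}" "0 \<le> K" "K * m \<le> 1" "m * (lo - x) \<le> S" "S \<le> m * (hi - x)"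
  shows "x + K * S \<in> {lo..hi}"
proof -
  have "K * S \<le> (K * m) * (hi - x)"
    using mult_left_mono[OF assms(5) assms(2)] by (simp add: mult.assoc)
  also have "\<dots> \<le> hi - x"
    using assms(1,3) mult_right_mono[OF assms(3), of "hi - x"] by simp
  finally have "K * S \<le> hi - x" .
  moreover have "(K * m) * (lo - x) \<le> K * S"
    using mult_left_mono[OF assms(4) assms(2)] by (simp add: mult.assoc)
  moreover have "lo - x \<le> (K * m) * (lo - x)"
    using assms(1) mult_right_mono_neg[OF assms(3), of "lo - x"] by simp
  ultimately show ?thesis by simp
qed

lemma curvature_increment_in_range:
  fixes x c a G B m lo hi :: real
  assumes x: "x \<in> {lo..hi}" and "0 \<le> c" "0 \<le> m" "\<bar>a\<bar> \<le> B" "c * B * m \<le> 1" "0 \<le> G"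
    and "0 \<le> a \<Longrightarrow> G \<le> m * (hi - x)"
    and erosion: "a < 0 \<Longrightarrow> G \<le> m * (x - lo)"
  shows "x + c * a * G \<in> {lo..hi}"
proof -
  have "c * \<bar>a\<bar> * m \<le> 1"
    using assms(2-5) by (meson mult_left_mono mult_right_mono order_trans)
  show ?thesis
  proof (cases "0 \<le> a")
    case True
    then show ?thesis
      using increment_in_range[OF x, of "c * a" m G] \<open>c * \<bar>a\<bar> * m \<le> 1\<close> assms
        mult_nonneg_nonpos[of m "lo - x"]
      by simp
  next
    case False
    have "x + (c * - a) * - G \<in> {lo..hi}"
    proof (rule increment_in_range[OF x])
      show "m * (lo - x) \<le> - G" using erosion False by (simp add: right_diff_distrib)
      have "0 \<le> m * (hi - x)" using x \<open>0 \<le> m\<close> by simp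
      with \<open>0 \<le> G\<close> show "- G \<le> m * (hi - x)" by linarith
    qed (use \<open>c * \<bar>a\<bar> * m \<le> 1\<close> \<open>0 \<le> c\<close> False in \<open>auto simp: mult_nonneg_nonpos\<close>)
    then show ?thesis by simp
  qed
qed

lemma minmod_flux_difference_bounds:
  "minmod a b c - minmod d a b \<in> {min (min a (- b)) 0 .. max (max a (- b)) 0}"
  unfolding minmod_def by (auto simp: abs_if zero_le_mult_iff mult_le_0_iff)

lemma minmod_flux_difference_in_range:
  assumes "0 < H" "bounded_on UNIV lo hi v"
    and "a = (v k l - v i j) / H" "b = (v i j - v m n) / H"
  shows "minmod a b c - minmod d a b \<in> {(lo - v i j) / H .. (hi - v i j) / H}"
proof -
  have "- b = (v m n - v i j) / H" using assms(4) by (simp add: minus_divide_left)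
  then have "a \<in> {(lo - v i j) / H .. (hi - v i j) / H}"
    "- b \<in> {(lo - v i j) / H .. (hi - v i j) / H}" "0 \<in> {(lo - v i j) / H .. (hi - v i j) / H}"
    using assms bounded_onD[OF assms(2), of i j] bounded_onD[OF assms(2), of k l]
      bounded_onD[OF assms(2), of m n]
    by (auto simp: divide_right_mono divide_nonneg_pos divide_nonpos_pos)
  then show ?thesis
    using minmod_flux_difference_bounds[of a b c d] by auto
qed

lemma sum_of_four_values_in_range:
  assumes "bounded_on UNIV lo hi v"
  shows "v i1 j1 + v i2 j2 + v i3 j3 + v i4 j4 \<in> {4 * lo .. 4 * hi}"
  using bounded_onD[OF assms, of i1 j1] bounded_onD[OF assms, of i2 j2]
    bounded_onD[OF assms, of i3 j3] bounded_onD[OF assms, of i4 j4] by simp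

lemma five_point_increment_in_range:
  fixes x K S lo hi :: real
  assumes "x \<in> {lo..hi}" "0 \<le> K" "4 * K \<le> 1" "S \<in> {4 * lo .. 4 * hi}"
  shows "x + K * (S - 4 * x) \<in> {lo..hi}"
  using increment_in_range[OF assms(1,2), of 4 "S - 4 * x"] assms(3,4) by (simp add: mult.commute)

lemma two_flux_increment_in_range:
  fixes x K H X Y lo hi :: real
  assumes "x \<in> {lo..hi}" "0 < H" "0 \<le> K" "2 * K \<le> H"
    and "X \<in> {(lo - x) / H .. (hi - x) / H}" "Y \<in> {(lo - x) / H .. (hi - x) / H}"
  shows "x + K * (X + Y) \<in> {lo..hi}"
  using increment_in_range[OF assms(1,3), of "2 / H" "X + Y"] assms(2,4-6)
  by (simp add: field_simps)

lemma max_min_principle_Dplus: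
  assumes h: "0 < h" and "0 \<le> c" and cfl: "c * 4 * \<bar>p - 1\<bar> \<le> h\<^sup>2"
  shows "max_min_principle c (Dplus p h)"
  unfolding max_min_principle_def
proof (intro allI impI)
  fix lo hi v i j
  assume v: "bounded_on UNIV lo hi v"
  let ?x = "v i j"
  have x: "?x \<in> {lo..hi}" using bounded_onD[OF v] by simp
  show "?x + c * Dplus p h v i j \<in> {lo..hi}"
  proof (cases "1 \<le> p")
    case True
    define S where "S = v (i+1) j + v (i-1) j + v i (j+1) + v i (j-1)"
    have "?x + (c * (p - 1) / h\<^sup>2) * (S - 4 * ?x) \<in> {lo..hi}"
    proof (rule five_point_increment_in_range[OF x])
      show "4 * (c * (p - 1) / h\<^sup>2) \<le> 1" using cfl True h by (simp add: field_simps)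
      show "S \<in> {4 * lo .. 4 * hi}" unfolding S_def by (rule sum_of_four_values_in_range[OF v])
    qed (use True \<open>0 \<le> c\<close> in simp)
    then show ?thesis using True by (simp add: Dplus_def S_def)
  next
    case False
    define X where "X = minmod (dx h v i j) (dx h v (i-1) j) (dx h v (i-2) j)
       - minmod (dx h v (i+1) j) (dx h v i j) (dx h v (i-1) j)"
    define Y where "Y = minmod (dy h v i j) (dy h v i (j-1)) (dy h v i (j-2))
       - minmod (dy h v i (j+1)) (dy h v i j) (dy h v i (j-1))"
    have "?x + (c * (1 - p) / h) * (X + Y) \<in> {lo..hi}"
    proof (rule two_flux_increment_in_range[OF x h])
      show "X \<in> {(lo - ?x) / h .. (hi - ?x) / h}" unfolding X_def
        by (rule minmod_flux_difference_in_range[OF h v, where k = "i+1" and l = j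
              and m = "i-1" and n = j]) (simp_all add: dx_def)
      show "Y \<in> {(lo - ?x) / h .. (hi - ?x) / h}" unfolding Y_def
        by (rule minmod_flux_difference_in_range[OF h v, where k = i and l = "j+1"
              and m = i and n = "j-1"]) (simp_all add: dy_def)
      have "0 \<le> c * (1 - p)" using False \<open>0 \<le> c\<close> by simp
      then show "0 \<le> c * (1 - p) / h" using h by simp
      have "2 * (c * (1 - p)) \<le> h\<^sup>2" using cfl False \<open>0 \<le> c * (1 - p)\<close> by simp
      then show "2 * (c * (1 - p) / h) \<le> h" using h by (simp add: field_simps power2_eq_square)
    qed
    then show ?thesis using False by (simp add: Dplus_def X_def Y_def field_simps)
  qed
qed

lemma max_min_principle_Dtimes:
  assumes h: "0 < h" and "0 \<le> c" and cfl: "c * 2 * \<bar>p - 1\<bar> \<le> h\<^sup>2"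
  shows "max_min_principle c (Dtimes p h)"
  unfolding max_min_principle_def
proof (intro allI impI)
  fix lo hi v i j
  assume v: "bounded_on UNIV lo hi v"
  let ?x = "v i j"
  have x: "?x \<in> {lo..hi}" using bounded_onD[OF v] by simp
  show "?x + c * Dtimes p h v i j \<in> {lo..hi}"
  proof (cases "1 \<le> p")
    case True
    define S where "S = v (i+1) (j+1) + v (i-1) (j-1) + v (i+1) (j-1) + v (i-1) (j+1)"
    have "?x + (c * (p - 1) / (2 * h\<^sup>2)) * (S - 4 * ?x) \<in> {lo..hi}"
    proof (rule five_point_increment_in_range[OF x])
      show "4 * (c * (p - 1) / (2 * h\<^sup>2)) \<le> 1" using cfl True h by (simp add: field_simps)
      show "S \<in> {4 * lo .. 4 * hi}" unfolding S_def by (rule sum_of_four_values_in_range[OF v])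
    qed (use True \<open>0 \<le> c\<close> in simp)
    then show ?thesis using True by (simp add: Dtimes_def S_def)
  next
    case False
    define H where "H = sqrt 2 * h"
    have H: "0 < H" using h by (simp add: H_def)
    define X where "X = minmod (dd h v i j) (dd h v (i-1) (j-1)) (dd h v (i-2) (j-2))
       - minmod (dd h v (i+1) (j+1)) (dd h v i j) (dd h v (i-1) (j-1))"
    define Y where "Y = minmod (de h v i j) (de h v (i-1) (j+1)) (de h v (i-2) (j+2))
       - minmod (de h v (i+1) (j-1)) (de h v i j) (de h v (i-1) (j+1))"
    have "?x + (c * (1 - p) / H) * (X + Y) \<in> {lo..hi}"
    proof (rule two_flux_increment_in_range[OF x H])
      show "X \<in> {(lo - ?x) / H .. (hi - ?x) / H}" unfolding X_def
        by (rule minmod_flux_difference_in_range[OF H v, where k = "i+1" and l = "j+1"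
              and m = "i-1" and n = "j-1"]) (simp_all add: dd_def H_def)
      show "Y \<in> {(lo - ?x) / H .. (hi - ?x) / H}" unfolding Y_def
        by (rule minmod_flux_difference_in_range[OF H v, where k = "i+1" and l = "j-1"
              and m = "i-1" and n = "j+1"]) (simp_all add: de_def H_def)
      have "0 \<le> c * (1 - p)" using False \<open>0 \<le> c\<close> by simp
      then show "0 \<le> c * (1 - p) / H" using H by simp
      have "c * (1 - p) \<le> h\<^sup>2" using cfl False \<open>0 \<le> c * (1 - p)\<close> by simp
      moreover have "H * H = 2 * h\<^sup>2" by (simp add: H_def power2_eq_square)
      ultimately show "2 * (c * (1 - p) / H) \<le> H" using H by (simp add: field_simps)
    qed
    then show ?thesis using False by (simp add: Dtimes_def X_def Y_def H_def field_simps)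
  qed
qed

lemma abs_curv_le: "0 < h \<Longrightarrow> \<bar>curv h v i j\<bar> \<le> 2 / h"
  unfolding curv_def Let_def by (auto simp: abs_if)

lemma upwind_norm_le:
  fixes u1 u2 u3 u4 B :: real
  assumes "u1 \<le> B" "u2 \<le> B" "u3 \<le> B" "u4 \<le> B" "0 \<le> B"
  shows "sqrt ((max (max u1 u2) 0)\<^sup>2 + (max (max u3 u4) 0)\<^sup>2) \<le> sqrt 2 * B"
proof -
  have "(max (max u1 u2) 0)\<^sup>2 \<le> B\<^sup>2" "(max (max u3 u4) 0)\<^sup>2 \<le> B\<^sup>2"
    using assms by (auto intro!: power_mono)
  then have "sqrt ((max (max u1 u2) 0)\<^sup>2 + (max (max u3 u4) 0)\<^sup>2) \<le> sqrt (2 * B\<^sup>2)"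
    by simp
  also have "\<dots> = sqrt 2 * B" using assms(5) by (simp add: real_sqrt_mult)
  finally show ?thesis .
qed

lemma difference_quotient_bounds:
  assumes "0 < H" "bounded_on UNIV lo hi v"
  shows "(v k l - v i j) / H \<le> (hi - v i j) / H" "(v i j - v k l) / H \<le> (v i j - lo) / H"
  using assms bounded_onD[OF assms(2), of k l] by (simp_all add: divide_right_mono)

lemma Gplus_upwind_bounds:
  assumes h: "0 < h" and v: "bounded_on UNIV lo hi v"
  shows "0 \<le> (2 - p) * curv h v i j \<Longrightarrow> Gplus p h v i j \<le> sqrt 2 / h * (hi - v i j)"
    and "(2 - p) * curv h v i j < 0 \<Longrightarrow> Gplus p h v i j \<le> sqrt 2 / h * (v i j - lo)"
proof -
  note d = difference_quotient_bounds[OF h v]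
  have nonneg: "0 \<le> (hi - v i j) / h" "0 \<le> (v i j - lo) / h"
    using bounded_onD[OF v, of i j] h by simp_all
  show "Gplus p h v i j \<le> sqrt 2 / h * (hi - v i j)" if "0 \<le> (2 - p) * curv h v i j"
    using that upwind_norm_le[OF d(1)[where k = "i-1" and l = j] d(1)[where k = "i+1" and l = j]
        d(1)[where k = i and l = "j-1"] d(1)[where k = i and l = "j+1"] nonneg(1)]
    by (simp add: Gplus_def dx_def dy_def minus_divide_left)
  show "Gplus p h v i j \<le> sqrt 2 / h * (v i j - lo)" if "(2 - p) * curv h v i j < 0"
    using that upwind_norm_le[OF d(2)[where k = "i+1" and l = j] d(2)[where k = "i-1" and l = j]
        d(2)[where k = i and l = "j+1"] d(2)[where k = i and l = "j-1"] nonneg(2)]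
    by (simp add: Gplus_def dx_def dy_def minus_divide_left)
qed

lemma Gtimes_upwind_bounds:
  assumes h: "0 < h" and v: "bounded_on UNIV lo hi v"
  shows "0 \<le> (2 - p) * curv h v i j \<Longrightarrow> Gtimes p h v i j \<le> 1 / h * (hi - v i j)"
    and "(2 - p) * curv h v i j < 0 \<Longrightarrow> Gtimes p h v i j \<le> 1 / h * (v i j - lo)"
proof -
  define H where "H = sqrt 2 * h"
  have H: "0 < H" using h by (simp add: H_def)
  note d = difference_quotient_bounds[OF H v]
  have nonneg: "0 \<le> (hi - v i j) / H" "0 \<le> (v i j - lo) / H"
    using bounded_onD[OF v, of i j] H by simp_all
  have "sqrt 2 * ((hi - v i j) / H) = 1 / h * (hi - v i j)"
    "sqrt 2 * ((v i j - lo) / H) = 1 / h * (v i j - lo)"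
    using h by (simp_all add: H_def)
  moreover have "Gtimes p h v i j \<le> sqrt 2 * ((hi - v i j) / H)" if "0 \<le> (2 - p) * curv h v i j"
    using that upwind_norm_le[OF d(1)[where k = "i-1" and l = "j-1"] d(1)[where k = "i+1" and l = "j+1"]
        d(1)[where k = "i-1" and l = "j+1"] d(1)[where k = "i+1" and l = "j-1"] nonneg(1)]
    by (simp add: Gtimes_def dd_def de_def H_def minus_divide_left)
  moreover have "Gtimes p h v i j \<le> sqrt 2 * ((v i j - lo) / H)" if "(2 - p) * curv h v i j < 0"
    using that upwind_norm_le[OF d(2)[where k = "i+1" and l = "j+1"] d(2)[where k = "i-1" and l = "j-1"]
        d(2)[where k = "i+1" and l = "j-1"] d(2)[where k = "i-1" and l = "j+1"] nonneg(2)]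
    by (simp add: Gtimes_def dd_def de_def H_def minus_divide_left)
  ultimately show "0 \<le> (2 - p) * curv h v i j \<Longrightarrow> Gtimes p h v i j \<le> 1 / h * (hi - v i j)"
    and "(2 - p) * curv h v i j < 0 \<Longrightarrow> Gtimes p h v i j \<le> 1 / h * (v i j - lo)"
    by simp_all
qed

lemma max_min_principle_Mplus:
  assumes h: "0 < h" and "0 \<le> c" and cfl: "c * (2 * sqrt 2) * \<bar>2 - p\<bar> \<le> h\<^sup>2"
  shows "max_min_principle c (Mplus p h)"
  unfolding max_min_principle_def
proof (intro allI impI)
  fix lo hi v i j
  assume v: "bounded_on UNIV lo hi v"
  have "v i j + c * ((2 - p) * curv h v i j) * Gplus p h v i j \<in> {lo..hi}"
  proof (rule curvature_increment_in_range[where B = "\<bar>2 - p\<bar> * (2 / h)" and m = "sqrt 2 / h"])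
    show "\<bar>(2 - p) * curv h v i j\<bar> \<le> \<bar>2 - p\<bar> * (2 / h)"
      unfolding abs_mult by (rule mult_left_mono[OF abs_curv_le[OF h]]) simp
    show "c * (\<bar>2 - p\<bar> * (2 / h)) * (sqrt 2 / h) \<le> 1"
      using cfl h by (simp add: field_simps power2_eq_square)
  qed (use bounded_onD[OF v] h \<open>0 \<le> c\<close> Gplus_upwind_bounds[OF h v] in \<open>auto simp: Gplus_def\<close>)
  then show "v i j + c * Mplus p h v i j \<in> {lo..hi}" by (simp add: Mplus_def mult.assoc)
qed

lemma max_min_principle_Mtimes:
  assumes h: "0 < h" and "0 \<le> c" and cfl: "c * 2 * \<bar>2 - p\<bar> \<le> h\<^sup>2"
  shows "max_min_principle c (Mtimes p h)"
  unfolding max_min_principle_def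
proof (intro allI impI)
  fix lo hi v i j
  assume v: "bounded_on UNIV lo hi v"
  have "v i j + c * ((2 - p) * curv h v i j) * Gtimes p h v i j \<in> {lo..hi}"
  proof (rule curvature_increment_in_range[where B = "\<bar>2 - p\<bar> * (2 / h)" and m = "1 / h"])
    show "\<bar>(2 - p) * curv h v i j\<bar> \<le> \<bar>2 - p\<bar> * (2 / h)"
      unfolding abs_mult by (rule mult_left_mono[OF abs_curv_le[OF h]]) simp
    show "c * (\<bar>2 - p\<bar> * (2 / h)) * (1 / h) \<le> 1"
      using cfl h by (simp add: field_simps power2_eq_square)
  qed (use bounded_onD[OF v] h \<open>0 \<le> c\<close> Gtimes_upwind_bounds[OF h v] in \<open>auto simp: Gtimes_def\<close>)
  then show "v i j + c * Mtimes p h v i j \<in> {lo..hi}" by (simp add: Mtimes_def mult.assoc)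
qed

lemma refl_idx_in_range: "1 \<le> N \<Longrightarrow> refl_idx N i \<in> {0..<int N}"
  unfolding refl_idx_def Let_def
  using pos_mod_sign[of "2 * int N" i] pos_mod_bound[of "2 * int N" i] by auto

lemma bounded_on_ext:
  assumes "1 \<le> Nx" "1 \<le> Ny" "bounded_on (grid Nx Ny) lo hi u"
  shows "bounded_on UNIV lo hi (ext Nx Ny u)"
  using assms refl_idx_in_range[OF assms(1)] refl_idx_in_range[OF assms(2)]
  unfolding bounded_on_def ext_def grid_def by blast

lemma bounded_on_substep:
  assumes "1 \<le> Nx" "1 \<le> Ny" "max_min_principle c Op" "bounded_on (grid Nx Ny) lo hi u"
  shows "bounded_on (grid Nx Ny) lo hi (substep Nx Ny Op c u)"
  using assms(3) bounded_on_ext[OF assms(1,2,4)]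
  unfolding max_min_principle_def bounded_on_def substep_def by blast

(* For x = 0 the restriction is the informal +\<infinity>; the product form avoids HOL's y / 0 = 0. *)
lemma time_step_product_le:
  fixes t y d x :: real
  assumes "x \<noteq> 0 \<Longrightarrow> t \<le> y / (d * \<bar>x\<bar>)" "0 < d" "0 \<le> y"
  shows "t * d * \<bar>x\<bar> \<le> y"
  using assms by (cases "x = 0") (simp_all add: pos_le_divide_eq mult.assoc)

lemma bounded_on_scheme_step:
  assumes N: "1 \<le> Nx" "1 \<le> Ny"
    and h: "0 < h" and "0 < \<nu>" "\<nu> < 1" and "0 < \<tau>"
    and "p \<noteq> 1 \<Longrightarrow> \<tau> \<le> h\<^sup>2 / (4 * (1 - \<nu>) * \<bar>p - 1\<bar>)"
    and "p \<noteq> 1 \<Longrightarrow> \<tau> \<le> h\<^sup>2 / (2 * \<nu> * \<bar>p - 1\<bar>)"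
    and "p \<noteq> 2 \<Longrightarrow> \<tau> \<le> h\<^sup>2 / (2 * sqrt 2 * (1 - \<nu>) * \<bar>2 - p\<bar>)"
    and "p \<noteq> 2 \<Longrightarrow> \<tau> \<le> h\<^sup>2 / (2 * \<nu> * \<bar>2 - p\<bar>)"
    and u: "bounded_on (grid Nx Ny) lo hi u"
  shows "bounded_on (grid Nx Ny) lo hi (scheme_step Nx Ny h p \<nu> \<tau> u)"
proof -
  have "\<tau> * (4 * (1 - \<nu>)) * \<bar>p - 1\<bar> \<le> h\<^sup>2" "\<tau> * (2 * \<nu>) * \<bar>p - 1\<bar> \<le> h\<^sup>2"
    "\<tau> * (2 * sqrt 2 * (1 - \<nu>)) * \<bar>2 - p\<bar> \<le> h\<^sup>2" "\<tau> * (2 * \<nu>) * \<bar>2 - p\<bar> \<le> h\<^sup>2"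
    by (rule time_step_product_le; use assms in simp)+
  then have "max_min_principle (\<tau> * (1 - \<nu>)) (Dplus p h)"
    "max_min_principle (\<tau> * \<nu>) (Dtimes p h)"
    "max_min_principle (\<tau> * (1 - \<nu>)) (Mplus p h)"
    "max_min_principle (\<tau> * \<nu>) (Mtimes p h)"
    using assms
    by (auto intro!: max_min_principle_Dplus max_min_principle_Dtimes max_min_principle_Mplus
        max_min_principle_Mtimes simp: mult_ac)
  then show ?thesis
    unfolding scheme_step_def by (intro bounded_on_substep[OF N] u)
qed

lemma finite_grid: "finite (grid Nx Ny)"
  by (simp add: grid_def)

lemma bounded_on_grid_Min_Max:
  "bounded_on (grid Nx Ny)
     (Min ((\<lambda>(i, j). u i j) ` grid Nx Ny)) (Max ((\<lambda>(i, j). u i j) ` grid Nx Ny)) u"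
  unfolding bounded_on_def using finite_grid by (auto intro!: Min_le Max_ge)

lemma abs_le_supnorm: "x \<in> (\<lambda>(i, j). u i j) ` grid Nx Ny \<Longrightarrow> \<bar>x\<bar> \<le> supnorm Nx Ny u"
  unfolding supnorm_def using finite_grid by (auto intro!: Max_ge)

lemma supnorm_le_if_within_range:
  assumes "grid Nx Ny \<noteq> {}"
    and "bounded_on (grid Nx Ny)
           (Min ((\<lambda>(i, j). u i j) ` grid Nx Ny)) (Max ((\<lambda>(i, j). u i j) ` grid Nx Ny)) w"
  shows "supnorm Nx Ny w \<le> supnorm Nx Ny u"
proof -
  have "\<bar>Min ((\<lambda>(i, j). u i j) ` grid Nx Ny)\<bar> \<le> supnorm Nx Ny u"
    "\<bar>Max ((\<lambda>(i, j). u i j) ` grid Nx Ny)\<bar> \<le> supnorm Nx Ny u"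
    using assms(1) finite_grid by (auto intro!: abs_le_supnorm Min_in Max_in)
  then have "\<bar>w i j\<bar> \<le> supnorm Nx Ny u" if "(i, j) \<in> grid Nx Ny" for i j
    using assms(2) that unfolding bounded_on_def by fastforce
  then show ?thesis
    using assms(1) finite_grid unfolding supnorm_def by (auto simp: Max_le_iff)
qed

theorem proposition7:
  fixes Nx Ny :: nat and h p \<nu> \<tau> :: real and f :: "int \<Rightarrow> int \<Rightarrow> real"
  assumes "Nx \<ge> 1" and "Ny \<ge> 1"
    and "h > 0" and "0 < \<nu>" and "\<nu> < 1" and "\<tau> > 0"
    and "p \<noteq> 1 \<Longrightarrow> \<tau> \<le> h\<^sup>2 / (4 * (1 - \<nu>) * \<bar>p - 1\<bar>)"
    and "p \<noteq> 1 \<Longrightarrow> \<tau> \<le> h\<^sup>2 / (2 * \<nu> * \<bar>p - 1\<bar>)"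
    and "p \<noteq> 2 \<Longrightarrow> \<tau> \<le> h\<^sup>2 / (2 * sqrt 2 * (1 - \<nu>) * \<bar>2 - p\<bar>)"
    and "p \<noteq> 2 \<Longrightarrow> \<tau> \<le> h\<^sup>2 / (2 * \<nu> * \<bar>2 - p\<bar>)"
  shows "\<forall>k\<ge>1. supnorm Nx Ny (scheme Nx Ny h p \<nu> \<tau> f k)
                  \<le> supnorm Nx Ny (scheme Nx Ny h p \<nu> \<tau> f (k - 1))
       \<and> (\<forall>k\<ge>1. \<forall>(n, m) \<in> grid Nx Ny.
           Min ((\<lambda>(i, j). f i j) ` grid Nx Ny) \<le> scheme Nx Ny h p \<nu> \<tau> f k n m
         \<and> scheme Nx Ny h p \<nu> \<tau> f k n m \<le> Max ((\<lambda>(i, j). f i j) ` grid Nx Ny))"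
proof -
  let ?u = "scheme Nx Ny h p \<nu> \<tau> f"
  have step: "bounded_on (grid Nx Ny) lo hi (scheme_step Nx Ny h p \<nu> \<tau> u)"
    if "bounded_on (grid Nx Ny) lo hi u" for lo hi u
    by (rule bounded_on_scheme_step) (fact assms that)+
  have u_Suc: "?u (Suc k) = scheme_step Nx Ny h p \<nu> \<tau> (?u k)" for k
    by (simp add: scheme_def)
  have "grid Nx Ny \<noteq> {}" using assms(1,2) by (auto simp: grid_def)
  then have "supnorm Nx Ny (?u k) \<le> supnorm Nx Ny (?u (k - 1))" if "1 \<le> k" for k
    using that u_Suc[of "k - 1"]
    by (auto intro!: supnorm_le_if_within_range step bounded_on_grid_Min_Max)
  moreover have "bounded_on (grid Nx Ny) (Min ((\<lambda>(i, j). f i j) ` grid Nx Ny))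
      (Max ((\<lambda>(i, j). f i j) ` grid Nx Ny)) (?u k)" for k
  proof (induction k)
    case 0
    show ?case by (simp add: scheme_def bounded_on_grid_Min_Max)
  next
    case (Suc k)
    show ?case unfolding u_Suc by (rule step[OF Suc.IH])
  qed
  ultimately show ?thesis
    unfolding bounded_on_def by auto
qed

end
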